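(* Let $b(r),h(r)$ be smooth positive functions on an interval of $r>0$ and consider the metric $ds^2=-b^2dt^2+\dfrac{h^2}{b^2}dr^2+r^2(d\theta^2+\sin^2\theta\,d\phi^2)$. Let $\kappa_1,\kappa_2,\kappa_3$ be constants and $$K_{kl}=(\kappa_2r^2-2\kappa_3b^2)u_ku_l+(\kappa_1+2\kappa_2r^2+\kappa_3b^2)g_{kl}-\kappa_2r^2\,\chi_k\chi_l,$$ and let $T_{kl}=(\mu+p_\perp)u_ku_l+p_\perp g_{kl}+(p_r-p_\perp)\chi_k\chi_l$ be an anisotropic fluid stress-energy tensor with functions $\mu(r),p_r(r),p_\perp(r)$. Suppose the conformal Killing gravity field equations $R_{kl}-\tfrac12Rg_{kl}=T_{kl}+K_{kl}$ hold. Then $p_r=-\mu$ if and only if there is a constant $\kappa_4$ such that $$\frac{1}{h^2}=\kappa_3r^2+\kappa_4 .$$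
   Context: $u_k$ is the unit timelike covector with components $u_0=-b$ and all others zero; $\chi_k$ is the unit radial covector with $\chi_r=h/b$ and all others zero. $R_{kl}$ is the Ricci tensor and $R$ the scalar curvature of the metric. *)

theory Defs
  imports "HOL-Analysis.Analysis"
begin

definition smooth_on :: "(real \<Rightarrow> real) \<Rightarrow> real set \<Rightarrow> bool" where
  "smooth_on f I \<longleftrightarrow> (\<forall>n. \<forall>x\<in>I. (deriv ^^ n) f differentiable (at x))"

text \<open>Points of spacetime in coordinates x 0 = t, x 1 = r, x 2 = theta, x 3 = phi
  (components with index at least 4 are irrelevant).\<close>
type_synonym pt = "nat \<Rightarrow> real"
type_synonym metric = "nat \<Rightarrow> nat \<Rightarrow> pt \<Rightarrow> real"

definition pd :: "nat \<Rightarrow> (pt \<Rightarrow> real) \<Rightarrow> pt \<Rightarrow> real" where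
  "pd a f x = deriv (\<lambda>s. f (x(a := s))) (x a)"

definition inv_metric :: "metric \<Rightarrow> pt \<Rightarrow> nat \<Rightarrow> nat \<Rightarrow> real" where
  "inv_metric g x = (THE G. (\<forall>i<4. \<forall>j<4. (\<Sum>k<4. g i k x * G k j) = (if i = j then 1 else 0))
                         \<and> (\<forall>i j. \<not> (i < 4 \<and> j < 4) \<longrightarrow> G i j = 0))"

definition christoffel :: "metric \<Rightarrow> nat \<Rightarrow> nat \<Rightarrow> nat \<Rightarrow> pt \<Rightarrow> real" where
  "christoffel g k i j x = (1/2) * (\<Sum>l<4. inv_metric g x k l *
      (pd i (g j l) x + pd j (g i l) x - pd l (g i j) x))"

definition ricci :: "metric \<Rightarrow> nat \<Rightarrow> nat \<Rightarrow> pt \<Rightarrow> real" where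
  "ricci g i j x = (\<Sum>k<4. pd k (christoffel g k i j) x - pd j (christoffel g k i k) x
      + (\<Sum>l<4. christoffel g k k l x * christoffel g l i j x
               - christoffel g k j l x * christoffel g l i k x))"

definition scalar_curv :: "metric \<Rightarrow> pt \<Rightarrow> real" where
  "scalar_curv g x = (\<Sum>i<4. \<Sum>j<4. inv_metric g x i j * ricci g i j x)"

definition sss_metric :: "(real \<Rightarrow> real) \<Rightarrow> (real \<Rightarrow> real) \<Rightarrow> metric" where
  "sss_metric b h i j x =
     (if i = 0 \<and> j = 0 then - ((b (x 1))^2)
      else if i = 1 \<and> j = 1 then (h (x 1))^2 / (b (x 1))^2
      else if i = 2 \<and> j = 2 then (x 1)^2
      else if i = 3 \<and> j = 3 then (x 1)^2 * (sin (x 2))^2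
      else 0)"

definition u_cov :: "(real \<Rightarrow> real) \<Rightarrow> pt \<Rightarrow> nat \<Rightarrow> real" where
  "u_cov b x k = (if k = 0 then - b (x 1) else 0)"

definition chi_cov :: "(real \<Rightarrow> real) \<Rightarrow> (real \<Rightarrow> real) \<Rightarrow> pt \<Rightarrow> nat \<Rightarrow> real" where
  "chi_cov b h x k = (if k = 1 then h (x 1) / b (x 1) else 0)"

end

theory Submission
  imports Defs
begin

text \<open>Contract the field equations with the radial null vector \<open>n = u + \<chi>\<close>,
  i.e. \<open>n\<^sup>k = (1/b, b/h, 0, 0)\<close>.  Since \<open>g(n,n) = 0\<close>, every term proportional to the
  metric drops out (the scalar curvature and \<open>\<kappa>\<^sub>1\<close> in particular), and since
  \<open>u(n) = \<chi>(n) = 1\<close> the \<open>p\<^sub>\<perp>\<close>- and \<open>\<kappa>\<^sub>2\<close>-terms cancel in pairs.  On the geometric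
  side the second derivatives of \<open>b\<close> cancel as well, leaving \<open>R(n,n) = 2 b\<^sup>2 h' / (r h\<^sup>3)\<close>.
  Hence \<open>\<mu> + p\<^sub>r = 2 b\<^sup>2 (\<kappa>\<^sub>3 + h' / (r h\<^sup>3)) = - (b\<^sup>2 / r) F'\<close> with
  \<open>F = 1/h\<^sup>2 - \<kappa>\<^sub>3 r\<^sup>2\<close>, so \<open>p\<^sub>r = -\<mu>\<close> holds exactly when \<open>F\<close> is constant on the interval.\<close>

lemma sum_lessThan_4: "(\<Sum>k<(4::nat). f k) = f 0 + f 1 + f 2 + (f 3 :: 'a::comm_monoid_add)"
  by (simp add: eval_nat_numeral add.assoc)

lemma constant_on_interval_iff_derivative_zero:
  fixes f f' :: "real \<Rightarrow> real"
  assumes "is_interval I" "open I" and f': "\<And>r. r \<in> I \<Longrightarrow> (f has_real_derivative f' r) (at r)"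
  shows "(\<forall>r\<in>I. f' r = 0) \<longleftrightarrow> (\<exists>c. \<forall>r\<in>I. f r = c)"
proof
  assume "\<forall>r\<in>I. f' r = 0"
  then show "\<exists>c. \<forall>r\<in>I. f r = c"
    using assms f' by (intro has_field_derivative_zero_constant is_interval_convex)
      (auto intro: has_field_derivative_at_within)
next
  assume "\<exists>c. \<forall>r\<in>I. f r = c"
  then obtain c where c: "\<forall>r\<in>I. f r = c" ..
  show "\<forall>r\<in>I. f' r = 0"
  proof
    fix r assume r: "r \<in> I"
    have "eventually (\<lambda>s. f s = c) (nhds r)"
      using eventually_nhds_in_open[OF \<open>open I\<close> r] by (rule eventually_mono) (use c in auto)
    then have "deriv f r = deriv (\<lambda>_. c) r" by (rule deriv_cong_ev) simp
    then show "f' r = 0" using DERIV_imp_deriv[OF f'[OF r]] by simp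
  qed
qed

lemma smooth_on_differentiable:
  assumes "smooth_on f I" "r \<in> I"
  shows "f differentiable (at r)" and "deriv f differentiable (at r)"
proof -
  have "(deriv ^^ 0) f differentiable (at r)" "(deriv ^^ 1) f differentiable (at r)"
    using assms unfolding smooth_on_def by blast+
  then show "f differentiable (at r)" "deriv f differentiable (at r)" by simp_all
qed

definition sss_regular_on :: "(real \<Rightarrow> real) \<Rightarrow> (real \<Rightarrow> real) \<Rightarrow> real set \<Rightarrow> bool" where
  "sss_regular_on b h I \<longleftrightarrow>
     (\<forall>r\<in>I. r \<noteq> 0 \<and> b r \<noteq> 0 \<and> h r \<noteq> 0 \<and> b differentiable (at r) \<and> h differentiable (at r))"

definition sss_inv_metric :: "(real \<Rightarrow> real) \<Rightarrow> (real \<Rightarrow> real) \<Rightarrow> nat \<Rightarrow> real \<Rightarrow> real \<Rightarrow> real" where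
  "sss_inv_metric b h k r \<theta> = (if k = 0 then - 1 / (b r)^2 else if k = 1 then (b r)^2 / (h r)^2
     else if k = 2 then 1 / r^2 else if k = 3 then 1 / (r^2 * (sin \<theta>)^2) else 0)"

lemma inv_metric_sss_metric:
  assumes "b (x 1) \<noteq> 0" "h (x 1) \<noteq> 0" "x 1 \<noteq> 0" "sin (x 2) \<noteq> 0"
  shows "inv_metric (sss_metric b h) x = (\<lambda>k l. if k = l then sss_inv_metric b h k (x 1) (x 2) else 0)"
proof -
  let ?G = "\<lambda>k l. if k = l then sss_inv_metric b h k (x 1) (x 2) else 0"
  show ?thesis
    unfolding inv_metric_def
  proof (rule the_equality)
    show "(\<forall>i<4. \<forall>j<4. (\<Sum>k<4. sss_metric b h i k x * ?G k j) = (if i = j then 1 else 0)) \<and>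
      (\<forall>i j. \<not> (i < 4 \<and> j < 4) \<longrightarrow> ?G i j = 0)"
      using assms
      by (auto simp: sum_lessThan_4 sss_metric_def sss_inv_metric_def less_Suc_eq eval_nat_numeral field_simps)
  next
    fix G
    assume G: "(\<forall>i<4. \<forall>j<4. (\<Sum>k<4. sss_metric b h i k x * G k j) = (if i = j then 1 else 0)) \<and>
      (\<forall>i j. \<not> (i < 4 \<and> j < 4) \<longrightarrow> G i j = 0)"
    show "G = ?G"
    proof (intro ext)
      fix i j
      show "G i j = ?G i j"
      proof (cases "i < 4 \<and> j < 4")
        case True
        then have "(\<Sum>k<4. sss_metric b h i k x * G k j) = (if i = j then 1 else 0)" using G by auto
        moreover have "i = 0 \<or> i = 1 \<or> i = 2 \<or> i = 3" using True by auto
        ultimately show ?thesis using assms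
          by (auto simp: sum_lessThan_4 sss_metric_def sss_inv_metric_def field_simps)
      next
        case False
        then show ?thesis using G by (auto simp: sss_inv_metric_def)
      qed
    qed
  qed
qed

definition sss_metric_pd :: "(real \<Rightarrow> real) \<Rightarrow> (real \<Rightarrow> real) \<Rightarrow> nat \<Rightarrow> nat \<Rightarrow> nat \<Rightarrow> real \<Rightarrow> real \<Rightarrow> real" where
  "sss_metric_pd b h a i j r \<theta> = (if a = 1 then
       (if i = 0 \<and> j = 0 then - (2 * b r * deriv b r)
        else if i = 1 \<and> j = 1 then 2 * h r * deriv h r / (b r)^2 - 2 * (h r)^2 * deriv b r / (b r)^3
        else if i = 2 \<and> j = 2 then 2 * r
        else if i = 3 \<and> j = 3 then 2 * r * (sin \<theta>)^2 else 0)
     else if a = 2 then (if i = 3 \<and> j = 3 then 2 * r^2 * sin \<theta> * cos \<theta> else 0) else 0)"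

lemma pd_sss_metric:
  assumes db: "b differentiable (at (x 1))" and dh: "h differentiable (at (x 1))" and "b (x 1) \<noteq> 0"
  shows "pd a (sss_metric b h i j) x = sss_metric_pd b h a i j (x 1) (x 2)"
proof -
  note derivs = db[unfolded DERIV_deriv_iff_real_differentiable[symmetric]]
    dh[unfolded DERIV_deriv_iff_real_differentiable[symmetric]]
  have "((\<lambda>s. sss_metric b h i j (x(a := s))) has_real_derivative sss_metric_pd b h a i j (x 1) (x 2))
          (at (x a))"
  proof -
    consider "a = 1" | "a = 2" | "a \<noteq> 1" "a \<noteq> 2" by blast
    then show ?thesis
    proof cases
      case 1
      have "((\<lambda>s. (h s)^2 / (b s)^2) has_real_derivative
          2 * h (x 1) * deriv h (x 1) / (b (x 1))^2 - 2 * (h (x 1))^2 * deriv b (x 1) / (b (x 1))^3) (at (x 1))"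
        by (rule derivative_eq_intros derivs refl | use \<open>b (x 1) \<noteq> 0\<close> in
            \<open>simp add: field_simps power2_eq_square power3_eq_cube\<close>)+
      moreover have "((\<lambda>s. - ((b s)^2)) has_real_derivative - (2 * b (x 1) * deriv b (x 1))) (at (x 1))"
        by (rule derivative_eq_intros derivs refl | simp)+
      ultimately show ?thesis
        using 1 unfolding sss_metric_def sss_metric_pd_def
        by (auto intro!: derivative_eq_intros)
    next
      case 2
      show ?thesis
      proof (cases "i = 3 \<and> j = 3")
        case True
        then show ?thesis
          using 2 unfolding sss_metric_def sss_metric_pd_def by (auto intro!: derivative_eq_intros)
      next
        case False
        then have "(\<lambda>s. sss_metric b h i j (x(a := s))) = (\<lambda>_. sss_metric b h i j x)"
          using 2 by (auto simp: sss_metric_def)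
        then show ?thesis
          using 2 False unfolding sss_metric_pd_def by auto
      qed
    next
      case 3
      then have "(\<lambda>s. sss_metric b h i j (x(a := s))) = (\<lambda>_. sss_metric b h i j x)"
        by (auto simp: sss_metric_def)
      then show ?thesis
        using 3 by (simp add: sss_metric_pd_def)
    qed
  qed
  then show ?thesis unfolding pd_def by (rule DERIV_imp_deriv)
qed

definition sss_christoffel :: "(real \<Rightarrow> real) \<Rightarrow> (real \<Rightarrow> real) \<Rightarrow> nat \<Rightarrow> nat \<Rightarrow> nat \<Rightarrow> real \<Rightarrow> real \<Rightarrow> real" where
  "sss_christoffel b h k i j r \<theta> = 1/2 * sss_inv_metric b h k r \<theta> *
     (sss_metric_pd b h i j k r \<theta> + sss_metric_pd b h j i k r \<theta> - sss_metric_pd b h k i j r \<theta>)"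

lemma christoffel_sss_metric:
  assumes "sss_regular_on b h I" "x 1 \<in> I" "sin (x 2) \<noteq> 0" "k < 4"
  shows "christoffel (sss_metric b h) k i j x = sss_christoffel b h k i j (x 1) (x 2)"
proof -
  have "x 1 \<noteq> 0" "b (x 1) \<noteq> 0" "h (x 1) \<noteq> 0"
    "b differentiable (at (x 1))" "h differentiable (at (x 1))"
    using assms unfolding sss_regular_on_def by auto
  moreover have "k = 0 \<or> k = 1 \<or> k = 2 \<or> k = 3" using \<open>k < 4\<close> by auto
  ultimately show ?thesis
    using \<open>sin (x 2) \<noteq> 0\<close>
    by (auto simp: christoffel_def inv_metric_sss_metric pd_sss_metric sss_christoffel_def sum_lessThan_4)
qed

lemma eventually_fun_upd_in_open:
  assumes "open S" "x n \<in> S"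
  shows "eventually (\<lambda>s. (x(a := s)) n \<in> S) (nhds (x a))"
  using assms by (cases "a = n") (auto intro: eventually_nhds_in_open)

lemma pd_christoffel_sss_metric:
  assumes "open I" "sss_regular_on b h I" "x 1 \<in> I" "0 < x 2" "x 2 < pi" "k < 4"
  shows "pd a (christoffel (sss_metric b h) k i j) x =
    deriv (\<lambda>s. sss_christoffel b h k i j ((x(a := s)) 1) ((x(a := s)) 2)) (x a)"
  unfolding pd_def
proof (rule deriv_cong_ev[OF _ refl])
  have "eventually (\<lambda>s. (x(a := s)) 1 \<in> I \<and> (x(a := s)) 2 \<in> {0<..<pi}) (nhds (x a))"
    using assms by (intro eventually_conj eventually_fun_upd_in_open) auto
  then show "eventually (\<lambda>s. christoffel (sss_metric b h) k i j (x(a := s)) =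
      sss_christoffel b h k i j ((x(a := s)) 1) ((x(a := s)) 2)) (nhds (x a))"
  proof (rule eventually_mono)
    fix s assume "(x(a := s)) 1 \<in> I \<and> (x(a := s)) 2 \<in> {0<..<pi}"
    then show "christoffel (sss_metric b h) k i j (x(a := s)) =
        sss_christoffel b h k i j ((x(a := s)) 1) ((x(a := s)) 2)"
      using christoffel_sss_metric[OF \<open>sss_regular_on b h I\<close> _ _ \<open>k < 4\<close>] sin_gt_zero
      by (metis greaterThanLessThan_iff less_irrefl)
  qed
qed

lemma deriv_sss_christoffel:
  assumes db: "(b has_real_derivative deriv b r) (at r)" and dh: "(h has_real_derivative deriv h r) (at r)"
    and dbb: "(deriv b has_real_derivative deriv (deriv b) r) (at r)"
    and dhh: "(deriv h has_real_derivative deriv (deriv h) r) (at r)"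
    and nz: "b r \<noteq> 0" "h r \<noteq> 0" "r \<noteq> 0" and sin_nz: "sin \<theta> \<noteq> 0"
  shows "deriv (\<lambda>s. sss_christoffel b h 1 0 0 s \<theta>) r =
           (3 * (b r)^2 * (deriv b r)^2 + (b r)^3 * deriv (deriv b) r) / (h r)^2
           - 2 * (b r)^3 * deriv b r * deriv h r / (h r)^3"
    and "deriv (\<lambda>s. sss_christoffel b h 1 1 1 s \<theta>) r =
           (deriv (deriv h) r * h r - (deriv h r)^2) / (h r)^2
           - (deriv (deriv b) r * b r - (deriv b r)^2) / (b r)^2"
    and "deriv (\<lambda>s. sss_christoffel b h 0 1 0 s \<theta>) r =
           (deriv (deriv b) r * b r - (deriv b r)^2) / (b r)^2"
    and "deriv (\<lambda>s. sss_christoffel b h 2 1 2 s \<theta>) r = - 1 / r^2"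
    and "deriv (\<lambda>s. sss_christoffel b h 3 1 3 s \<theta>) r = - 1 / r^2"
  unfolding sss_christoffel_def sss_inv_metric_def sss_metric_pd_def
  by (simp_all add: sin_nz, (rule DERIV_imp_deriv, rule DERIV_cong,
      (rule db dh dbb dhh derivative_eq_intros refl | (simp add: nz sin_nz; fail))+,
      use nz sin_nz in \<open>simp add: field_simps power2_eq_square power3_eq_cube\<close>)+)

lemma sss_christoffel_theta_diag_zero:
  "sss_christoffel b h 2 0 0 r \<theta> = 0" "sss_christoffel b h 2 1 1 r \<theta> = 0"
  by (simp_all add: sss_christoffel_def sss_metric_pd_def)

text \<open>\<open>A(n, n)\<close> for the null vector \<open>n\<^sup>k = u\<^sup>k + \<chi>\<^sup>k = (1/b, b/h, 0, 0)\<close>.\<close>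
definition radial_null_component ::
    "(real \<Rightarrow> real) \<Rightarrow> (real \<Rightarrow> real) \<Rightarrow> (nat \<Rightarrow> nat \<Rightarrow> real) \<Rightarrow> real \<Rightarrow> real" where
  "radial_null_component b h A r = A 0 0 / (b r)^2 + (b r)^2 / (h r)^2 * A 1 1"

lemma radial_null_component_ricci:
  assumes "open I" "sss_regular_on b h I" "x 1 \<in> I" "0 < x 2" "x 2 < pi"
    and "deriv b differentiable (at (x 1))" "deriv h differentiable (at (x 1))"
  shows "radial_null_component b h (\<lambda>k l. ricci (sss_metric b h) k l x) (x 1) =
    2 * (b (x 1))^2 * deriv h (x 1) / (x 1 * (h (x 1))^3)"
proof -
  have sin_nz: "sin (x 2) \<noteq> 0" using assms sin_gt_zero by force
  have nz: "b (x 1) \<noteq> 0" "h (x 1) \<noteq> 0" "x 1 \<noteq> 0"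
    and "b differentiable (at (x 1))" "h differentiable (at (x 1))"
    using assms unfolding sss_regular_on_def by auto
  with assms(6,7) have "(b has_real_derivative deriv b (x 1)) (at (x 1))"
    "(h has_real_derivative deriv h (x 1)) (at (x 1))"
    "(deriv b has_real_derivative deriv (deriv b) (x 1)) (at (x 1))"
    "(deriv h has_real_derivative deriv (deriv h) (x 1)) (at (x 1))"
    by (simp_all add: DERIV_deriv_iff_real_differentiable)
  note radial_derivs = deriv_sss_christoffel[OF this nz sin_nz]
  note christoffels = pd_christoffel_sss_metric[OF assms(1-5)] christoffel_sss_metric[OF assms(2,3) sin_nz]
  show ?thesis
    unfolding radial_null_component_def ricci_def sum_lessThan_4
    apply (simp add: christoffels radial_derivs sss_christoffel_theta_diag_zero del: One_nat_def)
    apply (simp add: sss_christoffel_def sss_inv_metric_def sss_metric_pd_def sin_nz nz del: One_nat_def)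
    using nz apply (simp add: field_simps del: One_nat_def)
    apply algebra
    done
qed

definition ckg_field_equations ::
    "(real \<Rightarrow> real) \<Rightarrow> (real \<Rightarrow> real) \<Rightarrow> (real \<Rightarrow> real) \<Rightarrow> (real \<Rightarrow> real) \<Rightarrow> (real \<Rightarrow> real)
      \<Rightarrow> real \<Rightarrow> real \<Rightarrow> real \<Rightarrow> pt \<Rightarrow> bool" where
  "ckg_field_equations b h \<mu> p_r p_perp \<kappa>\<^sub>1 \<kappa>\<^sub>2 \<kappa>\<^sub>3 x \<longleftrightarrow>
    (\<forall>k<4. \<forall>l<4.
       ricci (sss_metric b h) k l x - (1/2) * scalar_curv (sss_metric b h) x * sss_metric b h k l x
       = ((\<mu> (x 1) + p_perp (x 1)) * u_cov b x k * u_cov b x l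
          + p_perp (x 1) * sss_metric b h k l x
          + (p_r (x 1) - p_perp (x 1)) * chi_cov b h x k * chi_cov b h x l)
       + ((\<kappa>\<^sub>2 * (x 1)^2 - 2 * \<kappa>\<^sub>3 * (b (x 1))^2) * u_cov b x k * u_cov b x l
          + (\<kappa>\<^sub>1 + 2 * \<kappa>\<^sub>2 * (x 1)^2 + \<kappa>\<^sub>3 * (b (x 1))^2) * sss_metric b h k l x
          - \<kappa>\<^sub>2 * (x 1)^2 * chi_cov b h x k * chi_cov b h x l))"

lemma radial_null_component_ckg_field_equations:
  assumes "ckg_field_equations b h \<mu> p_r p_perp \<kappa>\<^sub>1 \<kappa>\<^sub>2 \<kappa>\<^sub>3 x" "b (x 1) \<noteq> 0" "h (x 1) \<noteq> 0"
  shows "radial_null_component b h (\<lambda>k l. ricci (sss_metric b h) k l x) (x 1) =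
    \<mu> (x 1) + p_r (x 1) - 2 * \<kappa>\<^sub>3 * (b (x 1))^2"
proof -
  define r S where "r = x 1" and "S = scalar_curv (sss_metric b h) x"
  have "\<forall>k<4. \<forall>l<4. ricci (sss_metric b h) k l x - S / 2 * sss_metric b h k l x
       = ((\<mu> r + p_perp r) * u_cov b x k * u_cov b x l + p_perp r * sss_metric b h k l x
          + (p_r r - p_perp r) * chi_cov b h x k * chi_cov b h x l)
       + ((\<kappa>\<^sub>2 * r^2 - 2 * \<kappa>\<^sub>3 * (b r)^2) * u_cov b x k * u_cov b x l
          + (\<kappa>\<^sub>1 + 2 * \<kappa>\<^sub>2 * r^2 + \<kappa>\<^sub>3 * (b r)^2) * sss_metric b h k l x
          - \<kappa>\<^sub>2 * r^2 * chi_cov b h x k * chi_cov b h x l)"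
    using assms(1) unfolding ckg_field_equations_def r_def S_def by simp
  note E = this[rule_format]
  have R00: "ricci (sss_metric b h) 0 0 x =
      (b r)^2 * (\<mu> r - \<kappa>\<^sub>1 - \<kappa>\<^sub>2 * r^2 - 3 * \<kappa>\<^sub>3 * (b r)^2 - S / 2)"
    using E[of 0 0] by (simp add: sss_metric_def u_cov_def chi_cov_def r_def power2_eq_square algebra_simps)
  have R11: "ricci (sss_metric b h) 1 1 x =
      (h r)^2 / (b r)^2 * (p_r r + \<kappa>\<^sub>1 + \<kappa>\<^sub>2 * r^2 + \<kappa>\<^sub>3 * (b r)^2 + S / 2)"
  proof -
    define q where "q = (h r)^2 / (b r)^2"
    have g11: "sss_metric b h 1 1 x = q" and u1: "u_cov b x 1 = 0"
      and chi11: "chi_cov b h x 1 * chi_cov b h x 1 = q"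
      by (simp_all add: sss_metric_def u_cov_def chi_cov_def q_def r_def power2_eq_square)
    show ?thesis
      using E[of 1 1] unfolding g11 u1 mult.assoc chi11 q_def[symmetric] by (simp add: algebra_simps)
  qed
  show ?thesis
    using assms(2,3) unfolding radial_null_component_def r_def[symmetric] R00 R11
    by (simp add: field_simps)
qed

lemma ckg_field_equations_density_plus_radial_pressure:
  assumes "ckg_field_equations b h \<mu> p_r p_perp \<kappa>\<^sub>1 \<kappa>\<^sub>2 \<kappa>\<^sub>3 x"
    and "open I" "sss_regular_on b h I" "x 1 \<in> I" "0 < x 2" "x 2 < pi"
    and "deriv b differentiable (at (x 1))" "deriv h differentiable (at (x 1))"
  shows "\<mu> (x 1) + p_r (x 1) = 2 * (b (x 1))^2 * (\<kappa>\<^sub>3 + deriv h (x 1) / (x 1 * (h (x 1))^3))"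
proof -
  have "b (x 1) \<noteq> 0" "h (x 1) \<noteq> 0" using assms(3,4) unfolding sss_regular_on_def by auto
  with assms show ?thesis
    using radial_null_component_ckg_field_equations radial_null_component_ricci
    by (fastforce simp: distrib_left)
qed

theorem proposition6:
  fixes b h \<mu> p_r p_perp :: "real \<Rightarrow> real"
    and I :: "real set"
    and \<kappa>\<^sub>1 \<kappa>\<^sub>2 \<kappa>\<^sub>3 :: real
  assumes I_interval: "is_interval I" and I_open: "open I" and I_pos: "I \<subseteq> {0<..}"
    and b_smooth: "smooth_on b I" and h_smooth: "smooth_on h I"
    and b_pos: "\<forall>r\<in>I. b r > 0" and h_pos: "\<forall>r\<in>I. h r > 0"
    and field_eqs:
      "\<forall>x. x 1 \<in> I \<and> 0 < x 2 \<and> x 2 < pi \<longrightarrow>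
         (\<forall>k<4. \<forall>l<4.
            ricci (sss_metric b h) k l x - (1/2) * scalar_curv (sss_metric b h) x * sss_metric b h k l x
            = ((\<mu> (x 1) + p_perp (x 1)) * u_cov b x k * u_cov b x l
               + p_perp (x 1) * sss_metric b h k l x
               + (p_r (x 1) - p_perp (x 1)) * chi_cov b h x k * chi_cov b h x l)
            + ((\<kappa>\<^sub>2 * (x 1)^2 - 2 * \<kappa>\<^sub>3 * (b (x 1))^2) * u_cov b x k * u_cov b x l
               + (\<kappa>\<^sub>1 + 2 * \<kappa>\<^sub>2 * (x 1)^2 + \<kappa>\<^sub>3 * (b (x 1))^2) * sss_metric b h k l x
               - \<kappa>\<^sub>2 * (x 1)^2 * chi_cov b h x k * chi_cov b h x l))"
  shows "(\<forall>r\<in>I. p_r r = - \<mu> r) \<longleftrightarrow> (\<exists>\<kappa>\<^sub>4. \<forall>r\<in>I. 1 / (h r)^2 = \<kappa>\<^sub>3 * r^2 + \<kappa>\<^sub>4)"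
proof -
  have regular: "sss_regular_on b h I"
    using I_pos b_pos h_pos smooth_on_differentiable(1)[OF b_smooth] smooth_on_differentiable(1)[OF h_smooth]
    by (force simp: sss_regular_on_def)
  define Q where "Q r = \<kappa>\<^sub>3 + deriv h r / (r * (h r)^3)" for r
  have density_plus_radial_pressure: "\<mu> r + p_r r = 2 * (b r)^2 * Q r" if "r \<in> I" for r
  proof -
    define x :: pt where "x = (\<lambda>_. 0)(1 := r, 2 := pi / 2)"
    have x: "x 1 = r" "x 1 \<in> I" "0 < x 2" "x 2 < pi" using that by (simp_all add: x_def)
    with field_eqs have "ckg_field_equations b h \<mu> p_r p_perp \<kappa>\<^sub>1 \<kappa>\<^sub>2 \<kappa>\<^sub>3 x"
      unfolding ckg_field_equations_def by blast
    from ckg_field_equations_density_plus_radial_pressure[OF this I_open regular x(2-4)] show ?thesis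
      using x(1) that smooth_on_differentiable(2) b_smooth h_smooth by (simp add: Q_def)
  qed
  define F where "F r = 1 / (h r)^2 - \<kappa>\<^sub>3 * r^2" for r
  have F': "(F has_real_derivative - 2 * r * Q r) (at r)" if "r \<in> I" for r
  proof -
    have "(h has_real_derivative deriv h r) (at r)" "h r \<noteq> 0" "r \<noteq> 0"
      using that regular unfolding sss_regular_on_def by (auto simp: DERIV_deriv_iff_real_differentiable)
    then show ?thesis
      unfolding F_def[abs_def] Q_def
      by (auto intro!: derivative_eq_intros simp: field_simps power2_eq_square power3_eq_cube)
  qed
  have "(\<forall>r\<in>I. p_r r = - \<mu> r) \<longleftrightarrow> (\<forall>r\<in>I. - 2 * r * Q r = 0)"
    using density_plus_radial_pressure b_pos I_pos by (force simp: add_eq_0_iff)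
  also have "\<dots> \<longleftrightarrow> (\<exists>c. \<forall>r\<in>I. F r = c)"
    by (rule constant_on_interval_iff_derivative_zero[OF I_interval I_open F'])
  also have "\<dots> \<longleftrightarrow> (\<exists>\<kappa>\<^sub>4. \<forall>r\<in>I. 1 / (h r)^2 = \<kappa>\<^sub>3 * r^2 + \<kappa>\<^sub>4)"
    by (simp add: F_def diff_eq_eq add.commute)
  finally show ?thesis .
qed

end
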